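(* For every $n\ge 1$, the optimal value $E(n)$ of the linear program $$\text{minimize } \sum_{u\in\mathbb{F}_2^n}x_u \quad\text{subject to}\quad 0\le x_u\le 1\ (u\in\mathbb{F}_2^n),\qquad x_v+\sum_{\substack{u\in\mathbb{F}_2^n,\ u\supset v\\ \mathrm{dist}(u,v)=1}}x_u\ \ge\ 1\ \ \text{for all } v\in\mathbb{F}_2^n,$$ is $$E(n)=(-1)^n\,n!\,\{R_n(2)-R_n(1)R_{n-1}(1)\},\qquad\text{where } R_n(x)=\sum_{k=0}^n\frac{(-x)^k}{k!}.$$
   Context: Subsets of an $n$-set are identified with their indicator vectors in $\mathbb{F}_2^n$; $u\supset v$ means the support of $u$ contains the support of $v$, and dist denotes Hamming distance. $R_n(x)$ is the degree-$n$ partial sum of the Taylor series of $e^{-x}$. *)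

theory Defs
  imports Complex_Main
begin

text \<open>Vectors of F_2^n are identified with subsets of {0..<n} (their supports).\<close>

definition hamming_dist :: "nat set \<Rightarrow> nat set \<Rightarrow> nat" where
  "hamming_dist u v = card ((u - v) \<union> (v - u))"

definition lp_feasible :: "nat \<Rightarrow> (nat set \<Rightarrow> real) \<Rightarrow> bool" where
  "lp_feasible n x \<longleftrightarrow>
     (\<forall>u\<in>Pow {..<n}. 0 \<le> x u \<and> x u \<le> 1) \<and>
     (\<forall>v\<in>Pow {..<n}.
        x v + (\<Sum>u\<in>{u\<in>Pow {..<n}. v \<subseteq> u \<and> hamming_dist u v = 1}. x u) \<ge> 1)"

definition lp_objective :: "nat \<Rightarrow> (nat set \<Rightarrow> real) \<Rightarrow> real" where
  "lp_objective n x = (\<Sum>u\<in>Pow {..<n}. x u)"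

definition E :: "nat \<Rightarrow> real" where
  "E n = (INF x\<in>{x. lp_feasible n x}. lp_objective n x)"

definition R :: "nat \<Rightarrow> real \<Rightarrow> real" where
  "R n x = (\<Sum>k=0..n. (-x) ^ k / fact k)"

end

theory Submission
  imports Defs
begin

(* Weak LP duality, with primal and dual solutions that are constant on each level |u| = k.
   The primal solution x_u = y_|u| has y_0 = 0, y_(k+1) = (1 - y_k) / (n - k) for k + 1 < n and
   y_n = 1, so that every covering constraint below level n - 1 is tight. The dual solution
   z_v = w_|v| has w_n = 1, w_(n-1) = 0 and w_(k-1) = (1 - w_k) / k, so that every dual
   constraint above level 0 is tight. The remaining constraints, at level n - 1 (primal) and
   level 0 (dual), have vanishing multipliers w_(n-1) = 0 and y_0 = 0, so complementary
   slackness gives E(n) = sum_k C(n,k) y_k. Solving the recurrence,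
   C(n,k) y_k is -(-1)^n n! times the sum of the coefficients (-1)^(a+b) / (a! b!) of
   exp(-s) exp(-t) over a = k, n - k < b <= n; apart from the term (-1)^n / n!, these are
   exactly the terms by which R_n(1) R_(n-1)(1) exceeds R_n(2). *)

definition upper_nbrs :: "nat \<Rightarrow> nat set \<Rightarrow> nat set set" where
  "upper_nbrs n v = {u\<in>Pow {..<n}. v \<subseteq> u \<and> hamming_dist u v = 1}"

definition lower_nbrs :: "nat \<Rightarrow> nat set \<Rightarrow> nat set set" where
  "lower_nbrs n u = {v\<in>Pow {..<n}. v \<subseteq> u \<and> hamming_dist u v = 1}"

lemma card_le_of_subset_lessThan: "u \<subseteq> {..<n} \<Longrightarrow> card u \<le> n"
  using card_mono[of "{..<n}" u] by simp

lemma hamming_dist_eq_1_iff_insert: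
  assumes "v \<subseteq> u"
  shows "hamming_dist u v = 1 \<longleftrightarrow> (\<exists>i. i \<notin> v \<and> u = insert i v)"
proof -
  have "(u - v) \<union> (v - u) = u - v"
    using assms by blast
  then have "hamming_dist u v = card (u - v)"
    by (simp add: hamming_dist_def)
  also have "\<dots> = 1 \<longleftrightarrow> (\<exists>i. u - v = {i})"
    by (simp add: card_1_singleton_iff)
  also have "\<dots> \<longleftrightarrow> (\<exists>i. i \<notin> v \<and> u = insert i v)"
    using assms by blast
  finally show ?thesis .
qed

lemma hamming_dist_insert: "i \<notin> v \<Longrightarrow> hamming_dist (insert i v) v = 1"
  using hamming_dist_eq_1_iff_insert[of v "insert i v"] by blast

lemma upper_nbrs_eq:
  assumes "v \<subseteq> {..<n}"
  shows "upper_nbrs n v = (\<lambda>i. insert i v) ` ({..<n} - v)"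
  using assms
  by (auto simp: upper_nbrs_def hamming_dist_eq_1_iff_insert[simplified] hamming_dist_insert[simplified])

lemma lower_nbrs_eq:
  assumes "u \<subseteq> {..<n}"
  shows "lower_nbrs n u = (\<lambda>i. u - {i}) ` u"
  using assms by (auto simp: lower_nbrs_def hamming_dist_eq_1_iff_insert[simplified] insert_absorb)

lemma sum_upper_nbrs_card:
  assumes "v \<subseteq> {..<n}"
  shows "(\<Sum>u\<in>upper_nbrs n v. f (card u)) = real (n - card v) * f (Suc (card v))"
proof -
  have "finite v"
    using assms finite_subset by blast
  have "inj_on (\<lambda>i. insert i v) ({..<n} - v)"
    by (auto simp: inj_on_def)
  then have "(\<Sum>u\<in>upper_nbrs n v. f (card u)) = (\<Sum>i\<in>{..<n} - v. f (card (insert i v)))"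
    by (simp add: upper_nbrs_eq[OF assms] sum.reindex)
  also have "\<dots> = (\<Sum>i\<in>{..<n} - v. f (Suc (card v)))"
    using \<open>finite v\<close> by (intro sum.cong) auto
  finally show ?thesis
    using assms \<open>finite v\<close> by (simp add: card_Diff_subset)
qed

lemma sum_lower_nbrs_card:
  assumes "u \<subseteq> {..<n}"
  shows "(\<Sum>v\<in>lower_nbrs n u. f (card v)) = real (card u) * f (card u - 1)"
proof -
  have "finite u"
    using assms finite_subset by blast
  have "inj_on (\<lambda>i. u - {i}) u"
    by (auto simp: inj_on_def)
  then have "(\<Sum>v\<in>lower_nbrs n u. f (card v)) = (\<Sum>i\<in>u. f (card (u - {i})))"
    by (simp add: lower_nbrs_eq[OF assms] sum.reindex)
  also have "\<dots> = (\<Sum>i\<in>u. f (card u - 1))"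
    using \<open>finite u\<close> by (intro sum.cong) auto
  finally show ?thesis
    by simp
qed

lemma sum_Pow_lessThan_card:
  "(\<Sum>u\<in>Pow {..<n}. f (card u)) = (\<Sum>k\<le>n. of_nat (n choose k) * f k)"
proof -
  have "(\<Sum>u\<in>Pow {..<n}. f (card u)) = (\<Sum>k\<le>n. \<Sum>u\<in>{u\<in>Pow {..<n}. card u = k}. f (card u))"
    by (rule sum.group[symmetric]) (auto intro: card_le_of_subset_lessThan)
  also have "\<dots> = (\<Sum>k\<le>n. of_nat (n choose k) * f k)"
  proof (rule sum.cong[OF refl])
    fix k
    have "card {u\<in>Pow {..<n}. card u = k} = n choose k"
      using n_subsets[of "{..<n}" k] by (simp add: Pow_def)
    then show "(\<Sum>u\<in>{u\<in>Pow {..<n}. card u = k}. f (card u)) = of_nat (n choose k) * f k"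
      by simp
  qed
  finally show ?thesis .
qed

lemma sum_mult_sum_restrict_swap:
  fixes x z :: "'a \<Rightarrow> 'b::comm_semiring_0"
  assumes "finite A"
  shows "(\<Sum>v\<in>A. z v * (\<Sum>u\<in>{u\<in>A. P u v}. x u)) = (\<Sum>u\<in>A. x u * (\<Sum>v\<in>{v\<in>A. P u v}. z v))"
proof -
  have "(\<Sum>v\<in>A. z v * (\<Sum>u\<in>{u\<in>A. P u v}. x u)) = (\<Sum>v\<in>A. \<Sum>u\<in>{u\<in>A. P u v}. x u * z v)"
    by (simp add: sum_distrib_left mult.commute)
  also have "\<dots> = (\<Sum>u\<in>A. \<Sum>v\<in>{v\<in>A. P u v}. x u * z v)"
    using assms assms by (rule sum.swap_restrict)
  finally show ?thesis
    by (simp add: sum_distrib_left)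
qed

lemma lp_feasible_iff:
  "lp_feasible n x \<longleftrightarrow>
     (\<forall>u\<in>Pow {..<n}. 0 \<le> x u \<and> x u \<le> 1) \<and>
     (\<forall>v\<in>Pow {..<n}. 1 \<le> x v + (\<Sum>u\<in>upper_nbrs n v. x u))"
  by (simp add: lp_feasible_def upper_nbrs_def)

definition dual_feasible :: "nat \<Rightarrow> (nat set \<Rightarrow> real) \<Rightarrow> bool" where
  "dual_feasible n z \<longleftrightarrow>
     (\<forall>u\<in>Pow {..<n}. 0 \<le> z u \<and> z u + (\<Sum>v\<in>lower_nbrs n u. z v) \<le> 1)"

lemma lp_duality_gap:
  "lp_objective n x - (\<Sum>v\<in>Pow {..<n}. z v) =
     (\<Sum>u\<in>Pow {..<n}. x u * (1 - (z u + (\<Sum>v\<in>lower_nbrs n u. z v)))) +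
     (\<Sum>v\<in>Pow {..<n}. z v * (x v + (\<Sum>u\<in>upper_nbrs n v. x u) - 1))"
proof -
  have "(\<Sum>v\<in>Pow {..<n}. z v * (\<Sum>u\<in>upper_nbrs n v. x u)) =
        (\<Sum>u\<in>Pow {..<n}. x u * (\<Sum>v\<in>lower_nbrs n u. z v))"
    unfolding upper_nbrs_def lower_nbrs_def by (rule sum_mult_sum_restrict_swap) simp
  then show ?thesis
    by (simp add: lp_objective_def algebra_simps sum.distrib sum_subtractf)
qed

lemma weak_duality:
  assumes "lp_feasible n x" and "dual_feasible n z"
  shows "(\<Sum>v\<in>Pow {..<n}. z v) \<le> lp_objective n x"
proof -
  have "0 \<le> x u * (1 - (z u + (\<Sum>v\<in>lower_nbrs n u. z v)))" if "u \<in> Pow {..<n}" for u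
    using assms that by (simp add: lp_feasible_iff dual_feasible_def)
  moreover have "0 \<le> z v * (x v + (\<Sum>u\<in>upper_nbrs n v. x u) - 1)" if "v \<in> Pow {..<n}" for v
    using assms that by (simp add: lp_feasible_iff dual_feasible_def)
  ultimately have "0 \<le> lp_objective n x - (\<Sum>v\<in>Pow {..<n}. z v)"
    unfolding lp_duality_gap by (intro add_nonneg_nonneg sum_nonneg) auto
  then show ?thesis
    by simp
qed

lemma E_eq_lp_objective_if_dual_attains:
  assumes "lp_feasible n x" and "dual_feasible n z"
    and "(\<Sum>v\<in>Pow {..<n}. z v) = lp_objective n x"
  shows "E n = lp_objective n x"
  unfolding E_def
proof (rule cInf_eq_minimum)
  show "lp_objective n x \<in> lp_objective n ` {x. lp_feasible n x}"
    using assms(1) by blast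
  show "lp_objective n x \<le> y" if "y \<in> lp_objective n ` {x. lp_feasible n x}" for y
    using that weak_duality[OF _ assms(2)] assms(3) by auto
qed

lemma lp_objective_eq_if_complementary_slackness:
  assumes "\<And>u. u \<in> Pow {..<n} \<Longrightarrow> x u = 0 \<or> z u + (\<Sum>v\<in>lower_nbrs n u. z v) = 1"
    and "\<And>v. v \<in> Pow {..<n} \<Longrightarrow> z v = 0 \<or> x v + (\<Sum>u\<in>upper_nbrs n v. x u) = 1"
  shows "lp_objective n x = (\<Sum>v\<in>Pow {..<n}. z v)"
proof -
  have "(\<Sum>u\<in>Pow {..<n}. x u * (1 - (z u + (\<Sum>v\<in>lower_nbrs n u. z v)))) = 0"
    using assms(1) by (intro sum.neutral) fastforce
  moreover have "(\<Sum>v\<in>Pow {..<n}. z v * (x v + (\<Sum>u\<in>upper_nbrs n v. x u) - 1)) = 0"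
    using assms(2) by (intro sum.neutral) fastforce
  ultimately have "lp_objective n x - (\<Sum>v\<in>Pow {..<n}. z v) = 0"
    unfolding lp_duality_gap by simp
  then show ?thesis
    by simp
qed

fun tight_seq :: "nat \<Rightarrow> nat \<Rightarrow> real" where
  "tight_seq n 0 = 0"
| "tight_seq n (Suc k) = (1 - tight_seq n k) / real (n - k)"

lemma tight_seq_bounds: "0 \<le> tight_seq n k \<and> tight_seq n k \<le> 1"
proof (induction k)
  case (Suc k)
  then show ?case
    by (cases "n - k") (simp_all add: divide_le_eq)
qed simp

lemma tight_seq_step: "k < n \<Longrightarrow> tight_seq n k + real (n - k) * tight_seq n (Suc k) = 1"
  by simp

lemma tight_seq_eq:
  "k \<le> n \<Longrightarrow> tight_seq n k = (\<Sum>j<k. (-1) ^ (k + j + 1) * fact (n - k) / fact (n - j))"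
proof (induction k)
  case (Suc k)
  then have fact_eq: "fact (n - k) = real (n - k) * fact (n - Suc k)"
    by (metis Suc_diff_Suc Suc_le_lessD fact_Suc of_nat_Suc)
  have "n - k > 0"
    using Suc.prems by simp
  have term_eq: "(-1) ^ (k + j + 1) * fact (n - k) / fact (n - j) / real (n - k) =
      - ((-1) ^ (Suc k + j + 1) * fact (n - Suc k) / fact (n - j))" for j
    using \<open>n - k > 0\<close> by (simp add: fact_eq)
  have "tight_seq n (Suc k) =
        1 / real (n - k) - (\<Sum>j<k. (-1) ^ (k + j + 1) * fact (n - k) / fact (n - j)) / real (n - k)"
    using Suc by (simp add: diff_divide_distrib)
  also have "\<dots> = (-1) ^ (Suc k + k + 1) * fact (n - Suc k) / fact (n - k) +
      (\<Sum>j<k. (-1) ^ (Suc k + j + 1) * fact (n - Suc k) / fact (n - j))"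
    using \<open>n - k > 0\<close> by (simp add: fact_eq sum_divide_distrib term_eq sum_negf)
  also have "\<dots> = (\<Sum>j<Suc k. (-1) ^ (Suc k + j + 1) * fact (n - Suc k) / fact (n - j))"
    by simp
  finally show ?case .
qed simp

definition primal_level :: "nat \<Rightarrow> nat \<Rightarrow> real" where
  "primal_level n k = (if k < n then tight_seq n k else 1)"

(* The dual recurrence w_(k-1) = (1 - w_k) / k, started at w_(n-1) = 0, is tight_seq (n - 1)
   read backwards. *)
definition dual_level :: "nat \<Rightarrow> nat \<Rightarrow> real" where
  "dual_level n k = (if k < n then tight_seq (n - 1) (n - 1 - k) else 1)"

lemma primal_level_bounds: "0 \<le> primal_level n k \<and> primal_level n k \<le> 1"
  using tight_seq_bounds by (simp add: primal_level_def)

lemma dual_level_bounds: "0 \<le> dual_level n k \<and> dual_level n k \<le> 1"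
  using tight_seq_bounds by (simp add: dual_level_def)

lemma primal_level_0: "1 \<le> n \<Longrightarrow> primal_level n 0 = 0"
  by (simp add: primal_level_def)

lemma primal_level_tight:
  assumes "k \<le> n" and "Suc k \<noteq> n"
  shows "primal_level n k + real (n - k) * primal_level n (Suc k) = 1"
  using assms by (auto simp: primal_level_def)

lemma primal_level_covering:
  assumes "k \<le> n"
  shows "1 \<le> primal_level n k + real (n - k) * primal_level n (Suc k)"
proof (cases "Suc k = n")
  case True
  then show ?thesis
    using primal_level_bounds[of n k] by (simp add: primal_level_def)
qed (use assms primal_level_tight in simp)

lemma dual_level_below_top: "1 \<le> n \<Longrightarrow> dual_level n (n - 1) = 0"
  by (simp add: dual_level_def)

lemma dual_level_tight:
  assumes "1 \<le> k" and "k \<le> n"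
  shows "dual_level n k + real k * dual_level n (k - 1) = 1"
proof (cases "k = n")
  case False
  then have "dual_level n k = tight_seq (n - 1) (n - 1 - k)"
    and "dual_level n (k - 1) = tight_seq (n - 1) (Suc (n - 1 - k))"
    and "n - 1 - (n - 1 - k) = k"
    using assms by (auto simp: dual_level_def Suc_diff_Suc)
  then show ?thesis
    using assms False tight_seq_step[of "n - 1 - k" "n - 1"] by simp
qed (use assms in \<open>simp add: dual_level_def\<close>)

lemma dual_level_packing:
  assumes "k \<le> n"
  shows "dual_level n k + real k * dual_level n (k - 1) \<le> 1"
proof (cases "k = 0")
  case True
  then show ?thesis
    using dual_level_bounds by simp
qed (use assms dual_level_tight in simp)

lemma lp_feasible_primal_level: "lp_feasible n (\<lambda>u. primal_level n (card u))"
  unfolding lp_feasible_iff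
proof (intro conjI ballI)
  fix u
  show "0 \<le> primal_level n (card u)" and "primal_level n (card u) \<le> 1"
    using primal_level_bounds by auto
next
  fix v assume "v \<in> Pow {..<n}"
  then show "1 \<le> primal_level n (card v) + (\<Sum>u\<in>upper_nbrs n v. primal_level n (card u))"
    using primal_level_covering[OF card_le_of_subset_lessThan] by (simp add: sum_upper_nbrs_card)
qed

lemma dual_feasible_dual_level: "dual_feasible n (\<lambda>v. dual_level n (card v))"
  unfolding dual_feasible_def
  using dual_level_bounds dual_level_packing[OF card_le_of_subset_lessThan]
  by (simp add: sum_lower_nbrs_card)

lemma lp_objective_primal_level_eq_dual:
  assumes "1 \<le> n"
  shows "lp_objective n (\<lambda>u. primal_level n (card u)) = (\<Sum>v\<in>Pow {..<n}. dual_level n (card v))"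
proof (rule lp_objective_eq_if_complementary_slackness)
  fix u assume "u \<in> Pow {..<n}"
  then show "primal_level n (card u) = 0 \<or>
      dual_level n (card u) + (\<Sum>v\<in>lower_nbrs n u. dual_level n (card v)) = 1"
    using assms primal_level_0 dual_level_tight[OF _ card_le_of_subset_lessThan]
    by (cases "card u = 0") (simp_all add: sum_lower_nbrs_card)
next
  fix v assume "v \<in> Pow {..<n}"
  then show "dual_level n (card v) = 0 \<or>
      primal_level n (card v) + (\<Sum>u\<in>upper_nbrs n v. primal_level n (card u)) = 1"
    using dual_level_below_top[OF assms] primal_level_tight[OF card_le_of_subset_lessThan]
    by (cases "Suc (card v) = n") (auto simp: sum_upper_nbrs_card)
qed

lemma E_eq_sum_binomial_tight_seq:
  assumes "1 \<le> n"
  shows "E n = 1 + (\<Sum>k<n. of_nat (n choose k) * tight_seq n k)"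
proof -
  have "E n = lp_objective n (\<lambda>u. primal_level n (card u))"
    using lp_feasible_primal_level dual_feasible_dual_level
      lp_objective_primal_level_eq_dual[OF assms]
    by (intro E_eq_lp_objective_if_dual_attains) auto
  also have "\<dots> = (\<Sum>k\<le>n. of_nat (n choose k) * primal_level n k)"
    unfolding lp_objective_def by (rule sum_Pow_lessThan_card)
  also have "\<dots> = 1 + (\<Sum>k<n. of_nat (n choose k) * tight_seq n k)"
    by (simp add: lessThan_Suc_atMost[symmetric] primal_level_def)
  finally show ?thesis .
qed

definition neg_exp_coeff :: "nat \<Rightarrow> nat \<Rightarrow> real" where
  "neg_exp_coeff a b = (-1) ^ (a + b) / (fact a * fact b)"

lemma neg_two_power_div_fact: "(-2::real) ^ k / fact k = (\<Sum>a\<le>k. neg_exp_coeff a (k - a))"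
proof -
  have "(-2::real) ^ k = (\<Sum>a\<le>k. of_nat (k choose a) * (-1) ^ a * (-1) ^ (k - a))"
    using binomial_ring[of "-1::real" "-1" k] by simp
  also have "\<dots> = (\<Sum>a\<le>k. fact k * neg_exp_coeff a (k - a))"
    by (intro sum.cong refl)
       (simp add: binomial_fact neg_exp_coeff_def field_simps flip: power_add)
  finally show ?thesis
    by (simp add: sum_distrib_left[symmetric])
qed

lemma R_two_eq: "R n 2 = (\<Sum>a\<le>n. \<Sum>b\<le>n - a. neg_exp_coeff a b)"
proof -
  have "R n 2 = (\<Sum>k\<le>n. \<Sum>a\<le>k. neg_exp_coeff a (k - a))"
    by (simp add: R_def atLeast0AtMost neg_two_power_div_fact)
  also have "\<dots> = (\<Sum>(a, b)\<in>{(a, b). a + b \<le> n}. neg_exp_coeff a b)"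
    by (rule sum.triangle_reindex_eq[symmetric])
  also have "\<dots> = (\<Sum>a\<le>n. \<Sum>b\<le>n - a. neg_exp_coeff a b)"
    by (simp add: pairs_le_eq_Sigma sum.Sigma)
  finally show ?thesis .
qed

lemma R_one_mult_R_one:
  assumes "1 \<le> n"
  shows "R n 1 * R (n - 1) 1 = (\<Sum>a<n. \<Sum>b\<le>n. neg_exp_coeff a b)"
proof -
  have "{..n - 1} = {..<n}"
    using assms by auto
  then have "R n 1 * R (n - 1) 1 = (\<Sum>a<n. (-1) ^ a / fact a) * (\<Sum>b\<le>n. (-1) ^ b / fact b)"
    by (simp add: R_def atLeast0AtMost mult.commute)
  then show ?thesis
    by (simp add: sum_product neg_exp_coeff_def power_add)
qed

lemma R_two_minus_R_one_mult_R_one: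
  assumes "1 \<le> n"
  shows "R n 2 - R n 1 * R (n - 1) 1 =
    (-1) ^ n / fact n - (\<Sum>a<n. \<Sum>b\<in>{n - a<..n}. neg_exp_coeff a b)"
proof -
  have split: "(\<Sum>b\<le>n. neg_exp_coeff a b) =
      (\<Sum>b\<le>n - a. neg_exp_coeff a b) + (\<Sum>b\<in>{n - a<..n}. neg_exp_coeff a b)" for a
    by (simp add: ivl_disj_un_one(3)[of "n - a" n, symmetric] sum.union_disjoint
        ivl_disj_int_one)
  have "R n 2 = neg_exp_coeff n 0 + (\<Sum>a<n. \<Sum>b\<le>n - a. neg_exp_coeff a b)"
    by (simp add: R_two_eq lessThan_Suc_atMost[symmetric])
  then show ?thesis
    unfolding R_one_mult_R_one[OF assms] split sum.distrib by (simp add: neg_exp_coeff_def)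
qed

lemma binomial_mult_tight_seq:
  assumes "k < n"
  shows "of_nat (n choose k) * tight_seq n k =
    - ((-1) ^ n * fact n) * (\<Sum>b\<in>{n - k<..n}. neg_exp_coeff k b)"
proof -
  have "of_nat (n choose k) * ((-1) ^ (k + j + 1) * fact (n - k) / fact (n - j)) =
      - ((-1) ^ n * fact n) * neg_exp_coeff k (n - j)" if "j \<le> n" for j
  proof -
    have "(-1::real) ^ n * (-1) ^ (k + (n - j)) = (-1) ^ (n + (k + (n - j)))"
      by (simp only: power_add)
    also have "n + (k + (n - j)) = (k + j) + 2 * (n - j)"
      using that by simp
    also have "(-1::real) ^ \<dots> = (-1) ^ (k + j)"
      by (simp add: power_add power_mult)
    finally have "(-1::real) ^ (k + j + 1) = - ((-1) ^ n * (-1) ^ (k + (n - j)))"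
      by simp
    then show ?thesis
      using assms by (simp add: binomial_fact neg_exp_coeff_def)
  qed
  then have "of_nat (n choose k) * tight_seq n k = (\<Sum>j<k. - ((-1) ^ n * fact n) * neg_exp_coeff k (n - j))"
    unfolding tight_seq_eq[OF less_imp_le[OF assms]] sum_distrib_left
    using assms by (intro sum.cong refl) simp
  also have "(\<Sum>j<k. - ((-1) ^ n * fact n) * neg_exp_coeff k (n - j)) =
      (\<Sum>b\<in>{n - k<..n}. - ((-1) ^ n * fact n) * neg_exp_coeff k b)"
    using assms by (intro sum.reindex_bij_witness[where i = "\<lambda>b. n - b" and j = "\<lambda>j. n - j"]) auto
  finally show ?thesis
    by (simp add: sum_distrib_left)
qed

lemma sum_binomial_tight_seq_eq_R:
  assumes "1 \<le> n"
  shows "1 + (\<Sum>k<n. of_nat (n choose k) * tight_seq n k) =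
    (-1) ^ n * fact n * (R n 2 - R n 1 * R (n - 1) 1)"
proof -
  have "(\<Sum>k<n. of_nat (n choose k) * tight_seq n k) =
      - ((-1) ^ n * fact n) * (\<Sum>a<n. \<Sum>b\<in>{n - a<..n}. neg_exp_coeff a b)"
    by (simp add: binomial_mult_tight_seq sum_distrib_left)
  moreover have "(-1::real) ^ n * (-1) ^ n = 1"
    by (simp flip: power_add)
  ultimately show ?thesis
    unfolding R_two_minus_R_one_mult_R_one[OF assms] by (simp add: right_diff_distrib)
qed

theorem theorem2:
  fixes n :: nat
  assumes "n \<ge> 1"
  shows "E n = (-1) ^ n * fact n * (R n 2 - R n 1 * R (n - 1) 1)"
  using E_eq_sum_binomial_tight_seq[OF assms] sum_binomial_tight_seq_eq_R[OF assms] by simp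

end
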